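(* The set consisting of the three identities $(xy)(zt)=(xz)(yt)$, $(xy)(zt)=(ty)(zx)$ and $(xy^2)y^2=x$ is a basis for $\Sigma_{2,3,4}$.
   Context: $y^2$ denotes $yy$. $\Sigma_{2,3,4}$ is the set of groupoid identities satisfied in the integers $\mathbb{Z}$ by each of the binary operations $x-y$, $-x+y$ and $-x-y$. A basis is a set of identities whose equational consequences are exactly $\Sigma_{2,3,4}$. *)

theory Defs
  imports Main
begin

datatype gterm = Var nat | Op gterm gterm

type_synonym identity = "gterm \<times> gterm"

fun eval :: "('a \<Rightarrow> 'a \<Rightarrow> 'a) \<Rightarrow> (nat \<Rightarrow> 'a) \<Rightarrow> gterm \<Rightarrow> 'a" where
  "eval f \<rho> (Var n) = \<rho> n"
| "eval f \<rho> (Op s t) = f (eval f \<rho> s) (eval f \<rho> t)"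

definition satisfies :: "('a \<Rightarrow> 'a \<Rightarrow> 'a) \<Rightarrow> identity \<Rightarrow> bool" where
  "satisfies f e \<longleftrightarrow> (\<forall>\<rho>. eval f \<rho> (fst e) = eval f \<rho> (snd e))"

definition Sigma234 :: "identity set" where
  "Sigma234 = {e. satisfies (\<lambda>x y::int. x - y) e \<and> satisfies (\<lambda>x y::int. - x + y) e
                  \<and> satisfies (\<lambda>x y::int. - x - y) e}"

fun subst :: "(nat \<Rightarrow> gterm) \<Rightarrow> gterm \<Rightarrow> gterm" where
  "subst \<sigma> (Var n) = \<sigma> n"
| "subst \<sigma> (Op s t) = Op (subst \<sigma> s) (subst \<sigma> t)"

inductive derivable :: "identity set \<Rightarrow> gterm \<Rightarrow> gterm \<Rightarrow> bool" for E where
  ax: "(s, t) \<in> E \<Longrightarrow> derivable E (subst \<sigma> s) (subst \<sigma> t)"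
| refl: "derivable E t t"
| sym: "derivable E s t \<Longrightarrow> derivable E t s"
| trans: "derivable E s t \<Longrightarrow> derivable E t u \<Longrightarrow> derivable E s u"
| cong: "derivable E s1 t1 \<Longrightarrow> derivable E s2 t2 \<Longrightarrow> derivable E (Op s1 s2) (Op t1 t2)"

definition consequences :: "identity set \<Rightarrow> identity set" where
  "consequences E = {(s, t). derivable E s t}"

definition is_basis_of :: "identity set \<Rightarrow> identity set \<Rightarrow> bool" where
  "is_basis_of B \<Sigma> \<longleftrightarrow> consequences B = \<Sigma>"

abbreviation vx where "vx \<equiv> Var 0"
abbreviation vy where "vy \<equiv> Var 1"
abbreviation vz where "vz \<equiv> Var 2"
abbreviation vt where "vt \<equiv> Var 3"

end

theory Submission
  imports Defs
begin

text \<open>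
  For completeness, work in the free algebra of the basis.
  By mediality the Mal'cev term p(x, y, z) = (xy)((yy)z), which satisfies p(x, y, y) = x and
  p(x, x, y) = y, commutes with the multiplication, so x + y = p(x, 0, y) is an abelian group
  on which the multiplication is affine: xy = L x + R y + c with L, R commuting additive
  involutions and 1 + L + R + LR = 0. Hence a term evaluates to a sum of L^p R^q applied to
  its variables and to c, one summand per variable occurrence or inner node at a position
  of parity (p, q); by 1 + L + R + LR = 0 only these counting vectors modulo constants
  matter. Modulo constants a vector on the Klein four-group is determined by its three
  nontrivial character sums, and these are exactly what the operations x - y, -x + y and
  -x - y compute (for inner nodes after a detour through leaves).
\<close>

lemma eval_subst: "eval f \<rho> (subst \<sigma> t) = eval f (\<lambda>n. eval f \<rho> (\<sigma> n)) t"
  by (induction t) auto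

lemma derivable_satisfies:
  assumes "\<And>e. e \<in> E \<Longrightarrow> satisfies f e" and "derivable E s t"
  shows "satisfies f (s, t)"
  using assms(2)
proof (induction rule: derivable.induct)
  case (ax s t \<sigma>)
  then show ?case using assms(1)[OF ax] by (simp add: satisfies_def eval_subst)
qed (auto simp: satisfies_def)

fun nsmul :: "nat \<Rightarrow> 'a::comm_monoid_add \<Rightarrow> 'a" where
  "nsmul 0 x = 0"
| "nsmul (Suc n) x = x + nsmul n x"

lemma nsmul_add: "nsmul (m + n) x = nsmul m x + nsmul n x"
  by (induction m) (simp_all add: add.assoc)

lemma nsmul_add_right: "nsmul k (x + y) = nsmul k x + nsmul k y"
  by (induction k) (simp_all add: algebra_simps)

lemma nsmul_zero: "nsmul k 0 = 0"
  by (induction k) simp_all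

lemma nsmul_hom:
  assumes "h 0 = 0" and "\<And>x y. h (x + y) = h x + h y"
  shows "h (nsmul k x) = nsmul k (h x)"
  by (induction k) (simp_all add: assms)

type_synonym parity = "bool \<times> bool"

definition at_root :: "parity \<Rightarrow> nat" where
  "at_root g = (if g = (False, False) then 1 else 0)"

text \<open>A position has parity (p, q) if the path to it from the root has p mod 2 left steps
  and q mod 2 right steps; the counting functions below are indexed by this parity.\<close>
fun occ :: "gterm \<Rightarrow> nat \<Rightarrow> parity \<Rightarrow> nat" where
  "occ (Var w) v g = (if w = v then at_root g else 0)"
| "occ (Op s t) v g = occ s v (apfst Not g) + occ t v (apsnd Not g)"

fun nodes :: "gterm \<Rightarrow> parity \<Rightarrow> nat" where
  "nodes (Var w) g = 0"
| "nodes (Op s t) g = nodes s (apfst Not g) + nodes t (apsnd Not g) + at_root g"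

fun leaves :: "gterm \<Rightarrow> parity \<Rightarrow> nat" where
  "leaves (Var w) g = at_root g"
| "leaves (Op s t) g = leaves s (apfst Not g) + leaves t (apsnd Not g)"

fun vars :: "gterm \<Rightarrow> nat set" where
  "vars (Var n) = {n}"
| "vars (Op s t) = vars s \<union> vars t"

lemma finite_vars: "finite (vars t)"
  by (induction t) auto

definition linear_op :: "int \<Rightarrow> int \<Rightarrow> int \<Rightarrow> int \<Rightarrow> int" where
  "linear_op a b x y = a * x + b * y"

definition signs234 :: "(int \<times> int) set" where
  "signs234 = {(1, -1), (-1, 1), (-1, -1)}"

lemma Sigma234_iff: "e \<in> Sigma234 \<longleftrightarrow> (\<forall>(a, b) \<in> signs234. satisfies (linear_op a b) e)"
proof -
  have "linear_op 1 (-1) = (\<lambda>x y. x - y)" "linear_op (-1) 1 = (\<lambda>x y. - x + y)"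
    "linear_op (-1) (-1) = (\<lambda>x y. - x - y)"
    by (simp_all add: linear_op_def fun_eq_iff)
  then show ?thesis by (simp add: Sigma234_def signs234_def)
qed

definition basis234 :: "identity set" where
  "basis234 = { (Op (Op vx vy) (Op vz vt), Op (Op vx vz) (Op vy vt)),
                (Op (Op vx vy) (Op vz vt), Op (Op vt vy) (Op vz vx)),
                (Op (Op vx (Op vy vy)) (Op vy vy), vx) }"

lemma consequences_basis234_subset: "consequences basis234 \<subseteq> Sigma234"
proof
  fix e assume "e \<in> consequences basis234"
  then obtain s t where e: "e = (s, t)" and der: "derivable basis234 s t"
    by (auto simp: consequences_def)
  have "satisfies (linear_op a b) (s, t)" if "(a, b) \<in> signs234" for a b
    using that by (intro derivable_satisfies[OF _ der])
      (auto simp: basis234_def satisfies_def linear_op_def signs234_def algebra_simps)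
  then show "e \<in> Sigma234" by (auto simp: Sigma234_iff e)
qed

text \<open>The image of the counting vector f under the character of the Klein four-group
  sending the two parity flips to a and b.\<close>
definition char_sum :: "int \<Rightarrow> int \<Rightarrow> (parity \<Rightarrow> int) \<Rightarrow> int" where
  "char_sum a b f
     = f (False, False) + a * f (True, False) + b * f (False, True) + a * b * f (True, True)"

lemma char_sum_diff: "char_sum a b (\<lambda>g. f g - h g) = char_sum a b f - char_sum a b h"
  by (simp add: char_sum_def algebra_simps)

lemma eq_const_if_char_sums_eq_0:
  assumes "\<And>a b. (a, b) \<in> signs234 \<Longrightarrow> char_sum a b f = 0"
  shows "f g = f (False, False)"
proof -
  obtain p q where g: "g = (p, q)" by fastforce
  show ?thesis
    using assms[of 1 "-1"] assms[of "-1" 1] assms[of "-1" "-1"] unfolding g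
    by (cases p; cases q) (simp_all add: signs234_def char_sum_def)
qed

lemma eval_linear_op_indicator:
  assumes "(a, b) \<in> signs234"
  shows "eval (linear_op a b) (\<lambda>w. if w = v then 1 else 0) t
    = char_sum a b (\<lambda>g. int (occ t v g))"
  using assms by (induction t) (auto simp: signs234_def char_sum_def linear_op_def at_root_def)

lemma eval_linear_op_one:
  assumes "(a, b) \<in> signs234"
  shows "eval (linear_op a b) (\<lambda>_. 1) t = char_sum a b (\<lambda>g. int (leaves t g))"
  using assms by (induction t) (auto simp: signs234_def char_sum_def linear_op_def at_root_def)

lemma char_sum_nodes_leaves:
  assumes "(a, b) \<in> signs234"
  shows "(1 - a - b) * char_sum a b (\<lambda>g. int (nodes t g))
    = 1 - char_sum a b (\<lambda>g. int (leaves t g))"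
  using assms by (induction t) (auto simp: signs234_def char_sum_def at_root_def)

lemma Sigma234_occ_diff_const:
  assumes "(s, t) \<in> Sigma234"
  shows "int (occ s v g) - int (occ t v g)
    = int (occ s v (False, False)) - int (occ t v (False, False))"
proof (rule eq_const_if_char_sums_eq_0)
  fix a b assume ab: "(a, b) \<in> signs234"
  then have "eval (linear_op a b) (\<lambda>w. if w = v then 1 else 0) s
      = eval (linear_op a b) (\<lambda>w. if w = v then 1 else 0) t"
    using assms by (auto simp: Sigma234_iff satisfies_def)
  then show "char_sum a b (\<lambda>g. int (occ s v g) - int (occ t v g)) = 0"
    by (simp add: char_sum_diff eval_linear_op_indicator[OF ab])
qed

lemma Sigma234_nodes_diff_const:
  assumes "(s, t) \<in> Sigma234"
  shows "int (nodes s g) - int (nodes t g)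
    = int (nodes s (False, False)) - int (nodes t (False, False))"
proof (rule eq_const_if_char_sums_eq_0)
  fix a b assume ab: "(a, b) \<in> signs234"
  then have "eval (linear_op a b) (\<lambda>_. 1) s = eval (linear_op a b) (\<lambda>_. 1) t"
    using assms by (auto simp: Sigma234_iff satisfies_def)
  then have "(1 - a - b) * char_sum a b (\<lambda>g. int (nodes s g) - int (nodes t g)) = 0"
    by (simp add: char_sum_diff right_diff_distrib char_sum_nodes_leaves[OF ab]
        eval_linear_op_one[OF ab])
  moreover have "1 - a - b \<noteq> 0"
    using ab by (auto simp: signs234_def)
  ultimately show "char_sum a b (\<lambda>g. int (nodes s g) - int (nodes t g)) = 0"
    by simp
qed

quotient_type free = gterm / "derivable basis234"
  by (intro equivpI reflpI sympI transpI) (auto intro: derivable.intros)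

lift_definition fmul :: "free \<Rightarrow> free \<Rightarrow> free" is Op
  by (rule derivable.cong)

lemma eval_fmul_Var: "eval fmul (\<lambda>n. abs_free (Var n)) t = abs_free t"
  by (induction t) (auto simp: fmul.abs_eq)

lemma fmul_medial: "fmul (fmul x y) (fmul z t) = fmul (fmul x z) (fmul y t)"
proof transfer
  fix x y z t
  show "derivable basis234 (Op (Op x y) (Op z t)) (Op (Op x z) (Op y t))"
    using derivable.ax[of "Op (Op vx vy) (Op vz vt)" "Op (Op vx vz) (Op vy vt)" basis234
        "(!) [x, y, z, t]"]
    by (simp add: basis234_def)
qed

lemma fmul_exchange: "fmul (fmul x y) (fmul z t) = fmul (fmul t y) (fmul z x)"
proof transfer
  fix x y z t
  show "derivable basis234 (Op (Op x y) (Op z t)) (Op (Op t y) (Op z x))"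
    using derivable.ax[of "Op (Op vx vy) (Op vz vt)" "Op (Op vt vy) (Op vz vx)" basis234
        "(!) [x, y, z, t]"]
    by (simp add: basis234_def)
qed

lemma fmul_square_cancel: "fmul (fmul x (fmul y y)) (fmul y y) = x"
proof transfer
  fix x y
  show "derivable basis234 (Op (Op x (Op y y)) (Op y y)) x"
    using derivable.ax[of "Op (Op vx (Op vy vy)) (Op vy vy)" vx basis234 "(!) [x, y]"]
    by (simp add: basis234_def)
qed

definition malcev :: "free \<Rightarrow> free \<Rightarrow> free \<Rightarrow> free" where
  "malcev x y z = fmul (fmul x y) (fmul (fmul y y) z)"

lemma malcev_right_cancel: "malcev x y y = x"
  unfolding malcev_def using fmul_square_cancel fmul_medial by simp

lemma malcev_left_cancel: "malcev x x y = y"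
  unfolding malcev_def by (metis fmul_square_cancel fmul_medial fmul_exchange)

lemma malcev_fmul:
  "malcev (fmul a1 a2) (fmul b1 b2) (fmul c1 c2) = fmul (malcev a1 b1 c1) (malcev a2 b2 c2)"
  unfolding malcev_def
  by (simp only: fmul_medial[of a1 a2 b1 b2] fmul_medial[of b1 b2 b1 b2]
      fmul_medial[of "fmul b1 b1" "fmul b2 b2" c1 c2]
      fmul_medial[of "fmul a1 b1" "fmul a2 b2" "fmul (fmul b1 b1) c1" "fmul (fmul b2 b2) c2"])

lemma malcev_interchange:
  "malcev (malcev a1 a2 a3) (malcev b1 b2 b3) (malcev c1 c2 c3)
     = malcev (malcev a1 b1 c1) (malcev a2 b2 c2) (malcev a3 b3 c3)"
  by (simp only: malcev_def[of a1 a2 a3] malcev_def[of b1 b2 b3] malcev_def[of c1 c2 c3]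
      malcev_fmul malcev_def[of "malcev a1 b1 c1" "malcev a2 b2 c2" "malcev a3 b3 c3"])

instantiation free :: ab_group_add
begin

definition zero_free :: free where "zero_free = abs_free (Var 0)"
definition plus_free :: "free \<Rightarrow> free \<Rightarrow> free" where "plus_free x y = malcev x 0 y"
definition uminus_free :: "free \<Rightarrow> free" where "uminus_free x = malcev 0 x 0"
definition minus_free :: "free \<Rightarrow> free \<Rightarrow> free" where "minus_free x y = x + - y"

instance
proof
  fix a b c :: free
  have "malcev (malcev a 0 b) 0 c = malcev (malcev a 0 b) (malcev 0 0 0) (malcev 0 0 c)"
    by (simp only: malcev_left_cancel)
  also have "\<dots> = malcev (malcev a 0 0) (malcev 0 0 0) (malcev b 0 c)"
    by (rule malcev_interchange)
  also have "\<dots> = malcev a 0 (malcev b 0 c)"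
    by (simp only: malcev_left_cancel malcev_right_cancel)
  finally show "a + b + c = a + (b + c)" by (simp add: plus_free_def)
  have "malcev a 0 b = malcev (malcev b b a) (malcev b b 0) (malcev b 0 0)"
    by (simp only: malcev_left_cancel malcev_right_cancel)
  also have "\<dots> = malcev (malcev b b b) (malcev b b 0) (malcev a 0 0)"
    by (rule malcev_interchange)
  also have "\<dots> = malcev b 0 a"
    by (simp only: malcev_left_cancel malcev_right_cancel)
  finally show "a + b = b + a" by (simp add: plus_free_def)
  show "0 + a = a" by (simp add: plus_free_def malcev_left_cancel)
  have "malcev (malcev 0 a 0) 0 a = malcev (malcev 0 a 0) (malcev a a 0) (malcev a a a)"
    by (simp only: malcev_left_cancel)
  also have "\<dots> = malcev (malcev 0 a a) (malcev a a a) (malcev 0 0 a)"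
    by (rule malcev_interchange)
  also have "\<dots> = 0"
    by (simp only: malcev_left_cancel malcev_right_cancel)
  finally show "- a + a = 0" by (simp add: plus_free_def uminus_free_def)
  show "a - b = a + - b" by (simp add: minus_free_def)
qed

end

lemma malcev_eq_diff_add: "malcev a b c = a - b + c"
proof -
  have "- b + c = malcev (malcev 0 b 0) (malcev 0 0 0) (malcev 0 0 c)"
    by (simp only: malcev_left_cancel plus_free_def uminus_free_def)
  also have "\<dots> = malcev (malcev 0 0 0) (malcev b 0 0) (malcev 0 0 c)"
    by (rule malcev_interchange)
  also have "\<dots> = malcev 0 b c"
    by (simp only: malcev_left_cancel malcev_right_cancel)
  finally have malcev_zero_left: "malcev 0 b c = - b + c" ..
  have "malcev a b c = malcev (malcev a 0 0) (malcev 0 0 b) (malcev 0 0 c)"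
    by (simp only: malcev_left_cancel malcev_right_cancel)
  also have "\<dots> = malcev (malcev a 0 0) (malcev 0 0 0) (malcev 0 b c)"
    by (rule malcev_interchange)
  also have "\<dots> = a + (- b + c)"
    by (simp only: malcev_left_cancel malcev_right_cancel plus_free_def malcev_zero_left)
  finally show ?thesis by (simp add: algebra_simps)
qed

definition offset :: free where "offset = fmul 0 0"
definition lhom :: "free \<Rightarrow> free" where "lhom x = fmul x 0 - offset"
definition rhom :: "free \<Rightarrow> free" where "rhom y = fmul 0 y - offset"

lemma fmul_affine: "fmul x y = lhom x + rhom y + offset"
proof -
  have "fmul x y = fmul (malcev x 0 0) (malcev 0 0 y)"
    by (simp only: malcev_left_cancel malcev_right_cancel)
  also have "\<dots> = malcev (fmul x 0) (fmul 0 0) (fmul 0 y)"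
    by (rule malcev_fmul[symmetric])
  finally show ?thesis by (simp add: malcev_eq_diff_add lhom_def rhom_def offset_def)
qed

lemma lhom_zero [simp]: "lhom 0 = 0"
  by (simp add: lhom_def offset_def)

lemma rhom_zero [simp]: "rhom 0 = 0"
  by (simp add: rhom_def offset_def)

lemma lhom_add: "lhom (x + y) = lhom x + lhom y"
proof -
  have "fmul (x + y) 0 = fmul (malcev x 0 y) (malcev 0 0 0)"
    by (simp only: malcev_left_cancel plus_free_def)
  also have "\<dots> = malcev (fmul x 0) (fmul 0 0) (fmul y 0)"
    by (rule malcev_fmul[symmetric])
  finally show ?thesis by (simp add: malcev_eq_diff_add lhom_def offset_def)
qed

lemma rhom_add: "rhom (x + y) = rhom x + rhom y"
proof -
  have "fmul 0 (x + y) = fmul (malcev 0 0 0) (malcev x 0 y)"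
    by (simp only: malcev_left_cancel plus_free_def)
  also have "\<dots> = malcev (fmul 0 x) (fmul 0 0) (fmul 0 y)"
    by (rule malcev_fmul[symmetric])
  finally show ?thesis by (simp add: malcev_eq_diff_add rhom_def offset_def)
qed

lemma lhom_rhom_commute: "lhom (rhom y) = rhom (lhom y)"
  using fmul_medial[of 0 y 0 0] by (simp add: fmul_affine lhom_add rhom_add algebra_simps)

lemma square_cancel_offset: "lhom (rhom offset) + lhom offset + rhom offset + offset = 0"
  using fmul_square_cancel[of 0 0] by (simp add: fmul_affine lhom_add rhom_add algebra_simps)

lemma lhom_lhom: "lhom (lhom x) = x"
proof -
  have "lhom (lhom x) + (lhom (rhom offset) + lhom offset + rhom offset + offset) = x"
    using fmul_square_cancel[of x 0] by (simp add: fmul_affine lhom_add rhom_add algebra_simps)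
  then show ?thesis by (simp add: square_cancel_offset)
qed

lemma rhom_rhom: "rhom (rhom x) = x"
  using fmul_exchange[of x 0 0 0]
  by (simp add: fmul_affine lhom_add rhom_add lhom_lhom algebra_simps)

lemma add_lhom_rhom_eq_0: "x + lhom x + rhom x + lhom (rhom x) = 0"
proof -
  have "lhom (rhom (lhom x + rhom x + offset)) + lhom offset + rhom (lhom x + rhom x + offset)
      + offset = 0"
    using fmul_square_cancel[of 0 x] by (simp add: fmul_affine lhom_add rhom_add algebra_simps)
  then have "(x + lhom x + rhom x + lhom (rhom x))
      + (lhom (rhom offset) + lhom offset + rhom offset + offset) = 0"
    by (simp add: lhom_add rhom_add lhom_rhom_commute lhom_lhom rhom_rhom algebra_simps)
  then show ?thesis by (simp add: square_cancel_offset)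
qed

lemma lhom_sum: "lhom (sum f A) = (\<Sum>a\<in>A. lhom (f a))"
  using sum_comp_morphism[of lhom f A] by (simp add: lhom_add o_def)

lemma rhom_sum: "rhom (sum f A) = (\<Sum>a\<in>A. rhom (f a))"
  using sum_comp_morphism[of rhom f A] by (simp add: rhom_add o_def)

lemma lhom_nsmul: "lhom (nsmul k x) = nsmul k (lhom x)"
  by (rule nsmul_hom) (simp_all add: lhom_add)

lemma rhom_nsmul: "rhom (nsmul k x) = nsmul k (rhom x)"
  by (rule nsmul_hom) (simp_all add: rhom_add)

definition lincomb :: "(parity \<Rightarrow> nat) \<Rightarrow> free \<Rightarrow> free" where
  "lincomb n x = nsmul (n (False, False)) x + nsmul (n (True, False)) (lhom x)
     + nsmul (n (False, True)) (rhom x) + nsmul (n (True, True)) (lhom (rhom x))"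

lemma lincomb_add: "lincomb (\<lambda>g. m g + n g) x = lincomb m x + lincomb n x"
  by (simp add: lincomb_def nsmul_add algebra_simps)

lemma lhom_lincomb: "lhom (lincomb n x) = lincomb (\<lambda>g. n (apfst Not g)) x"
  by (simp add: lincomb_def lhom_add lhom_nsmul lhom_lhom lhom_rhom_commute algebra_simps)

lemma rhom_lincomb: "rhom (lincomb n x) = lincomb (\<lambda>g. n (apsnd Not g)) x"
  by (simp add: lincomb_def rhom_add rhom_nsmul rhom_rhom lhom_rhom_commute algebra_simps)

lemma lincomb_at_root: "lincomb at_root x = x"
  by (simp add: lincomb_def at_root_def)

lemma lincomb_0: "lincomb (\<lambda>_. 0) x = 0"
  by (simp add: lincomb_def)

lemma lincomb_const: "lincomb (\<lambda>_. k) x = 0"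
proof -
  have "lincomb (\<lambda>_. k) x = nsmul k (x + lhom x + rhom x + lhom (rhom x))"
    by (simp add: lincomb_def nsmul_add_right)
  then show ?thesis by (simp add: add_lhom_rhom_eq_0 nsmul_zero)
qed

lemma lincomb_eq_if_diff_const:
  assumes "\<And>g. int (m g) - int (n g) = d"
  shows "lincomb m x = lincomb n x"
proof (cases "d \<ge> 0")
  case True
  then have "m g = n g + nat d" for g
    using assms[of g] by arith
  then have "m = (\<lambda>g. n g + nat d)" ..
  then show ?thesis by (simp add: lincomb_add lincomb_const)
next
  case False
  then have "n g = m g + nat (- d)" for g
    using assms[of g] by arith
  then have "n = (\<lambda>g. m g + nat (- d))" ..
  then show ?thesis by (simp add: lincomb_add lincomb_const)
qed

lemma lincomb_occ_Op:
  "lincomb (occ (Op s t) v) x = lhom (lincomb (occ s v) x) + rhom (lincomb (occ t v) x)"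
proof -
  have "occ (Op s t) v = (\<lambda>g. occ s v (apfst Not g) + occ t v (apsnd Not g))"
    by (simp add: fun_eq_iff)
  then show ?thesis by (simp only: lincomb_add lhom_lincomb rhom_lincomb)
qed

lemma lincomb_nodes_Op:
  "lincomb (nodes (Op s t)) x = lhom (lincomb (nodes s) x) + rhom (lincomb (nodes t) x) + x"
proof -
  have "nodes (Op s t) = (\<lambda>g. (nodes s (apfst Not g) + nodes t (apsnd Not g)) + at_root g)"
    by (simp add: fun_eq_iff)
  then show ?thesis by (simp only: lincomb_add lhom_lincomb rhom_lincomb lincomb_at_root)
qed

lemma eval_fmul_normal_form:
  assumes "finite V" and "vars t \<subseteq> V"
  shows "eval fmul \<rho> t = lincomb (nodes t) offset + (\<Sum>v\<in>V. lincomb (occ t v) (\<rho> v))"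
  using assms(2)
proof (induction t)
  case (Var w)
  have "occ (Var w) v = (if w = v then at_root else (\<lambda>_. 0))" for v
    by (simp add: fun_eq_iff)
  then have "lincomb (occ (Var w) v) (\<rho> v) = (if w = v then \<rho> v else 0)" for v
    by (simp add: lincomb_at_root lincomb_0)
  then have "(\<Sum>v\<in>V. lincomb (occ (Var w) v) (\<rho> v)) = \<rho> w"
    using Var assms(1) by (simp del: occ.simps)
  then show ?case by (simp add: lincomb_0 del: occ.simps)
next
  case (Op s t)
  then have IH:
    "eval fmul \<rho> s = lincomb (nodes s) offset + (\<Sum>v\<in>V. lincomb (occ s v) (\<rho> v))"
    "eval fmul \<rho> t = lincomb (nodes t) offset + (\<Sum>v\<in>V. lincomb (occ t v) (\<rho> v))"
    by simp_all
  have "eval fmul \<rho> (Op s t) = lhom (eval fmul \<rho> s) + rhom (eval fmul \<rho> t) + offset"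
    by (simp only: eval.simps fmul_affine)
  then show ?case
    unfolding IH lincomb_nodes_Op lincomb_occ_Op
    by (simp add: lhom_add rhom_add lhom_sum rhom_sum sum.distrib algebra_simps)
qed

lemma Sigma234_derivable:
  assumes "(s, t) \<in> Sigma234"
  shows "derivable basis234 s t"
proof -
  let ?\<rho> = "\<lambda>n. abs_free (Var n)"
  let ?V = "vars s \<union> vars t"
  have "lincomb (nodes s) offset = lincomb (nodes t) offset"
    by (rule lincomb_eq_if_diff_const) (rule Sigma234_nodes_diff_const[OF assms])
  moreover have "lincomb (occ s v) x = lincomb (occ t v) x" for v x
    by (rule lincomb_eq_if_diff_const) (rule Sigma234_occ_diff_const[OF assms])
  ultimately have "eval fmul ?\<rho> s = eval fmul ?\<rho> t"
    by (simp add: eval_fmul_normal_form[of ?V] finite_vars)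
  then have "abs_free s = abs_free t"
    by (simp add: eval_fmul_Var)
  then show ?thesis
    by (simp add: free.abs_eq_iff)
qed

theorem theorem7p2:
  shows "is_basis_of
     { (Op (Op vx vy) (Op vz vt), Op (Op vx vz) (Op vy vt)),
       (Op (Op vx vy) (Op vz vt), Op (Op vt vy) (Op vz vx)),
       (Op (Op vx (Op vy vy)) (Op vy vy), vx) }
     Sigma234"
proof -
  have "consequences basis234 = Sigma234"
    using consequences_basis234_subset Sigma234_derivable by (auto simp: consequences_def)
  then show ?thesis
    by (simp add: is_basis_of_def basis234_def)
qed

end
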